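(* Let $E$ be a finite set, $X_1,\ldots,X_n$ fuzzy subsets of $E$, $l_1,\ldots,l_n\in\{0,1\}$, and $\Phi_{l_1,\ldots,l_n}(Y_1,\ldots,Y_n)=Y_1^{(l_1)}\cap\cdots\cap Y_n^{(l_n)}$. Then for every $j\in\{0,\ldots,|E|\}$, $$\mathcal{F}^A(Q^{j,1}_{exactly})\big(X_1^{(l_1)}\tilde\cap\cdots\tilde\cap X_n^{(l_n)}\big)=\sum_{\substack{Y\in\mathcal{P}(E):\\|Y|=j}} m_{X_1^{(l_1)}\tilde\cap\cdots\tilde\cap X_n^{(l_n)}}(Y)=\sum_{\substack{Y_1,\ldots,Y_n\in\mathcal{P}(E):\\|Y_1\cap\cdots\cap Y_n|=j}} m_{X_1^{(l_1)}}(Y_1)\cdots m_{X_n^{(l_n)}}(Y_n)=\mathcal{F}^A(Q^{j,1}_{exactly}\circ\Phi_{l_1,\ldots,l_n})(X_1,\ldots,X_n).$$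
   Context: For a fuzzy set $X$ on $E$ and crisp $Y\subseteq E$, $m_X(Y)=\prod_{e\in Y}\mu_X(e)\prod_{e\in E\setminus Y}(1-\mu_X(e))$. For a semi-fuzzy quantifier $Q:\mathcal{P}(E)^n\to[0,1]$, $\mathcal{F}^A(Q)(X_1,\ldots,X_n)=\sum_{Y_1,\ldots,Y_n\in\mathcal{P}(E)}m_{X_1}(Y_1)\cdots m_{X_n}(Y_n)Q(Y_1,\ldots,Y_n)$. For crisp sets $Y^{(1)}=Y$, $Y^{(0)}=E\setminus Y$; for fuzzy sets $X^{(1)}=X$, $X^{(0)}$ has membership $1-\mu_X$, and $\tilde\cap$ is the pointwise product. $Q^{j,1}_{exactly}(Y)=1$ if $|Y|=j$ and $0$ otherwise; $(Q^{j,1}_{exactly}\circ\Phi_{l_1,\ldots,l_n})(Y_1,\ldots,Y_n)=Q^{j,1}_{exactly}(\Phi_{l_1,\ldots,l_n}(Y_1,\ldots,Y_n))$. *)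

theory Defs
  imports Complex_Main "HOL-Library.FuncSet"
begin

text \<open>Fuzzy subsets of a finite ground set E are membership functions 'a \<Rightarrow> real
  (values in [0,1] on E, assumed in the theorem).  Tuples of n sets are
  functions on the index set {..<n}.\<close>

definition mass :: "'a set \<Rightarrow> ('a \<Rightarrow> real) \<Rightarrow> 'a set \<Rightarrow> real" where
  "mass E \<mu> Y = (\<Prod>e\<in>Y. \<mu> e) * (\<Prod>e\<in>E - Y. 1 - \<mu> e)"

definition FA :: "'a set \<Rightarrow> nat \<Rightarrow> ((nat \<Rightarrow> 'a set) \<Rightarrow> real) \<Rightarrow> (nat \<Rightarrow> 'a \<Rightarrow> real) \<Rightarrow> real" where
  "FA E n Q X = (\<Sum>Ys\<in>PiE {..<n} (\<lambda>_. Pow E). (\<Prod>i<n. mass E (X i) (Ys i)) * Q Ys)"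

definition cpow :: "'a set \<Rightarrow> nat \<Rightarrow> 'a set \<Rightarrow> 'a set" where
  "cpow E l Y = (if l = 1 then Y else E - Y)"

definition fpow :: "nat \<Rightarrow> ('a \<Rightarrow> real) \<Rightarrow> ('a \<Rightarrow> real)" where
  "fpow l \<mu> = (if l = 1 then \<mu> else (\<lambda>e. 1 - \<mu> e))"

definition fint :: "nat \<Rightarrow> (nat \<Rightarrow> nat) \<Rightarrow> (nat \<Rightarrow> 'a \<Rightarrow> real) \<Rightarrow> 'a \<Rightarrow> real" where
  "fint n l X = (\<lambda>e. \<Prod>i<n. fpow (l i) (X i) e)"

definition Phi :: "'a set \<Rightarrow> nat \<Rightarrow> (nat \<Rightarrow> nat) \<Rightarrow> (nat \<Rightarrow> 'a set) \<Rightarrow> 'a set" where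
  "Phi E n l Ys = (\<Inter>i\<in>{..<n}. cpow E (l i) (Ys i))"

definition Q_exactly :: "nat \<Rightarrow> 'a set \<Rightarrow> real" where
  "Q_exactly j Y = (if card Y = j then 1 else 0)"

end

theory Submission
  imports Defs
begin

text \<open>Read probabilistically, mass E \<mu> is the law of the random subset of E that contains
  each e independently with probability \<mu> e.  For independent random sets Y_i with laws
  mass E \<mu>_i, a point e lies in their intersection with probability \<Prod>i. \<mu>_i e,
  independently in e, so the intersection has law mass E (\<lambda>e. \<Prod>i. \<mu>_i e); and
  complementing a random set turns its law mass E \<mu> into mass E (1 - \<mu>).  Counting by the
  cardinality of the intersection gives the claimed identities.  Combinatorially, the first fact
  is a transposition: a tuple (Y_i) of subsets of E is read column-wise as the sets
  {i. e \<in> Y_i}, the product of the row masses becomes a product of column masses, and the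
  column masses over all proper subsets of the index set add up to 1 - \<Prod>i. \<mu>_i e.\<close>

lemma mass_eq_prod_if:
  assumes "finite E" "Y \<subseteq> E"
  shows "mass E \<mu> Y = (\<Prod>e\<in>E. if e \<in> Y then \<mu> e else 1 - \<mu> e)"
proof -
  have "E \<inter> {e. e \<in> Y} = Y" "E \<inter> - {e. e \<in> Y} = E - Y"
    using assms(2) by auto
  then show ?thesis
    unfolding mass_def using assms(1) by (simp add: prod.If_cases)
qed

lemma mass_full: "mass I \<mu> I = (\<Prod>i\<in>I. \<mu> i)"
  by (simp add: mass_def)

lemma sum_mass_Pow:
  assumes "finite I"
  shows "(\<Sum>B\<in>Pow I. mass I \<mu> B) = 1"
  using prod_add[OF assms, of \<mu> "\<lambda>i. 1 - \<mu> i"] by (simp add: mass_def)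

lemma sum_mass_proper_subsets:
  assumes "finite I"
  shows "(\<Sum>B\<in>Pow I - {I}. mass I \<mu> B) = 1 - (\<Prod>i\<in>I. \<mu> i)"
  using assms by (simp add: sum_diff1 sum_mass_Pow mass_full)

lemma mass_fpow_cpow:
  assumes "Y \<subseteq> E"
  shows "mass E (fpow l \<mu>) (cpow E l Y) = mass E \<mu> Y"
proof -
  have "E - (E - Y) = Y"
    using assms by auto
  then show ?thesis
    unfolding mass_def fpow_def cpow_def by (simp add: mult.commute)
qed

lemma cpow_subset: "Y \<subseteq> E \<Longrightarrow> cpow E l Y \<subseteq> E"
  by (auto simp: cpow_def)

lemma cpow_cpow: "Y \<subseteq> E \<Longrightarrow> cpow E l (cpow E l Y) = Y"
  by (auto simp: cpow_def)

lemma prod_mass_transpose: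
  assumes "finite E" "finite I" "\<And>i. i \<in> I \<Longrightarrow> Ys i \<subseteq> E"
  shows "(\<Prod>i\<in>I. mass E (F i) (Ys i)) = (\<Prod>e\<in>E. mass I (\<lambda>i. F i e) {i\<in>I. e \<in> Ys i})"
proof -
  have "(\<Prod>i\<in>I. mass E (F i) (Ys i)) = (\<Prod>i\<in>I. \<Prod>e\<in>E. if e \<in> Ys i then F i e else 1 - F i e)"
    using assms by (intro prod.cong refl mass_eq_prod_if) auto
  also have "\<dots> = (\<Prod>e\<in>E. \<Prod>i\<in>I. if e \<in> Ys i then F i e else 1 - F i e)"
    by (rule prod.swap)
  also have "\<dots> = (\<Prod>e\<in>E. mass I (\<lambda>i. F i e) {i\<in>I. e \<in> Ys i})"
    using assms(2) by (intro prod.cong refl) (simp add: mass_eq_prod_if)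
  finally show ?thesis .
qed

text \<open>I \<noteq> {} is needed since the empty intersection is UNIV.\<close>
lemma bij_betw_columns:
  assumes "I \<noteq> {}" "Y \<subseteq> E"
  shows "bij_betw (\<lambda>Ys. \<lambda>e\<in>E. {i\<in>I. e \<in> Ys i})
           {Ys \<in> PiE I (\<lambda>_. Pow E). (\<Inter>i\<in>I. Ys i) = Y}
           (PiE E (\<lambda>e. if e \<in> Y then {I} else Pow I - {I}))"
proof (rule bij_betwI[where g = "\<lambda>c. \<lambda>i\<in>I. {e\<in>E. i \<in> c e}"])
  let ?S = "{Ys \<in> PiE I (\<lambda>_. Pow E). (\<Inter>i\<in>I. Ys i) = Y}"
  let ?C = "PiE E (\<lambda>e. if e \<in> Y then {I} else Pow I - {I})"
  have column_in: "c e = I" if "c \<in> ?C" "e \<in> Y" for c e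
    using PiE_mem[OF that(1), of e] that(2) assms(2) by auto
  have column_subset: "c e \<subseteq> I" if "c \<in> ?C" "e \<in> E" for c e
    using PiE_mem[OF that] by (auto split: if_splits)
  have column_proper: "c e \<noteq> I" if "c \<in> ?C" "e \<in> E" "e \<notin> Y" for c e
    using PiE_mem[OF that(1,2)] that(3) by auto
  have column_undefined: "c e = undefined" if "c \<in> ?C" "e \<notin> E" for c e
    using that by (auto simp: PiE_iff extensional_def)
  show "(\<lambda>Ys. \<lambda>e\<in>E. {i\<in>I. e \<in> Ys i}) \<in> ?S \<rightarrow> ?C"
  proof
    fix Ys assume Ys: "Ys \<in> ?S"
    have "{i\<in>I. e \<in> Ys i} \<in> (if e \<in> Y then {I} else Pow I - {I})" if "e \<in> E" for e
      using Ys that by auto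
    then show "(\<lambda>e\<in>E. {i\<in>I. e \<in> Ys i}) \<in> ?C"
      by auto
  qed
  show "(\<lambda>c. \<lambda>i\<in>I. {e\<in>E. i \<in> c e}) \<in> ?C \<rightarrow> ?S"
  proof
    fix c assume c: "c \<in> ?C"
    have "(\<Inter>i\<in>I. {e\<in>E. i \<in> c e}) = Y"
    proof
      show "(\<Inter>i\<in>I. {e\<in>E. i \<in> c e}) \<subseteq> Y"
        using column_proper[OF c] column_subset[OF c] assms(1) by blast
      show "Y \<subseteq> (\<Inter>i\<in>I. {e\<in>E. i \<in> c e})"
        using column_in[OF c] assms(2) by blast
    qed
    then show "(\<lambda>i\<in>I. {e\<in>E. i \<in> c e}) \<in> ?S"
      using assms(1) by auto
  qed
  show "(\<lambda>i\<in>I. {e\<in>E. i \<in> (\<lambda>e\<in>E. {i\<in>I. e \<in> Ys i}) e}) = Ys"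
    if "Ys \<in> ?S" for Ys
    using that by (auto simp: PiE_iff extensional_def fun_eq_iff)
  show "(\<lambda>e\<in>E. {i\<in>I. e \<in> (\<lambda>i\<in>I. {e\<in>E. i \<in> c e}) i}) = c"
    if "c \<in> ?C" for c
  proof (rule ext)
    fix e
    show "(\<lambda>e\<in>E. {i\<in>I. e \<in> (\<lambda>i\<in>I. {e\<in>E. i \<in> c e}) i}) e = c e"
    proof (cases "e \<in> E")
      case True
      then show ?thesis
        using column_subset[OF that True] by auto
    next
      case False
      then show ?thesis
        using column_undefined[OF that False] by simp
    qed
  qed
qed

lemma sum_prod_mass_Inter_eq:
  assumes "finite E" "finite I" "I \<noteq> {}" "Y \<subseteq> E"
  shows "(\<Sum>Ys\<in>{Ys \<in> PiE I (\<lambda>_. Pow E). (\<Inter>i\<in>I. Ys i) = Y}. \<Prod>i\<in>I. mass E (F i) (Ys i))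
         = mass E (\<lambda>e. \<Prod>i\<in>I. F i e) Y"
proof -
  let ?col = "\<lambda>Ys. \<lambda>e\<in>E. {i\<in>I. e \<in> Ys i}"
  let ?C = "\<lambda>e. if e \<in> Y then {I} else Pow I - {I}"
  let ?w = "\<lambda>e B. mass I (\<lambda>i. F i e) B"
  have "(\<Sum>Ys\<in>{Ys \<in> PiE I (\<lambda>_. Pow E). (\<Inter>i\<in>I. Ys i) = Y}. \<Prod>i\<in>I. mass E (F i) (Ys i))
      = (\<Sum>Ys\<in>{Ys \<in> PiE I (\<lambda>_. Pow E). (\<Inter>i\<in>I. Ys i) = Y}. \<Prod>e\<in>E. ?w e (?col Ys e))"
    using assms(1,2) by (intro sum.cong refl) (simp add: PiE_iff prod_mass_transpose[of E I])
  also have "\<dots> = (\<Sum>c\<in>PiE E ?C. \<Prod>e\<in>E. ?w e (c e))"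
    by (rule sum.reindex_bij_betw[OF bij_betw_columns[OF assms(3,4)]])
  also have "\<dots> = (\<Prod>e\<in>E. \<Sum>B\<in>?C e. ?w e B)"
    using assms(1,2) by (intro prod_sum_PiE[symmetric]) auto
  also have "\<dots> = (\<Prod>e\<in>E. if e \<in> Y then \<Prod>i\<in>I. F i e else 1 - (\<Prod>i\<in>I. F i e))"
    using assms(2) by (intro prod.cong refl) (simp add: mass_full sum_mass_proper_subsets)
  also have "\<dots> = mass E (\<lambda>e. \<Prod>i\<in>I. F i e) Y"
    using assms(1,4) by (simp add: mass_eq_prod_if)
  finally show ?thesis .
qed

lemma sum_prod_mass_card_Inter:
  assumes "finite E" "finite I" "I \<noteq> {}"
  shows "(\<Sum>Ys\<in>{Ys \<in> PiE I (\<lambda>_. Pow E). card (\<Inter>i\<in>I. Ys i) = j}. \<Prod>i\<in>I. mass E (F i) (Ys i))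
         = (\<Sum>Y\<in>{Y. Y \<subseteq> E \<and> card Y = j}. mass E (\<lambda>e. \<Prod>i\<in>I. F i e) Y)"
proof -
  let ?S = "{Ys \<in> PiE I (\<lambda>_. Pow E). card (\<Inter>i\<in>I. Ys i) = j}"
  have "finite (PiE I (\<lambda>_. Pow E))"
    using assms(1,2) by (intro finite_PiE) auto
  moreover have "(\<Inter>i\<in>I. Ys i) \<subseteq> E" if "Ys \<in> PiE I (\<lambda>_. Pow E)" for Ys
    using that assms(3) by (auto simp: PiE_iff)
  ultimately have "(\<Sum>Ys\<in>?S. \<Prod>i\<in>I. mass E (F i) (Ys i))
      = (\<Sum>Y\<in>{Y. Y \<subseteq> E \<and> card Y = j}. \<Sum>Ys\<in>{Ys \<in> ?S. (\<Inter>i\<in>I. Ys i) = Y}. \<Prod>i\<in>I. mass E (F i) (Ys i))"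
    using assms(1) by (intro sum.group[symmetric]) auto
  also have "\<dots> = (\<Sum>Y\<in>{Y. Y \<subseteq> E \<and> card Y = j}.
                     \<Sum>Ys\<in>{Ys \<in> PiE I (\<lambda>_. Pow E). (\<Inter>i\<in>I. Ys i) = Y}. \<Prod>i\<in>I. mass E (F i) (Ys i))"
    by (intro sum.cong refl) auto
  also have "\<dots> = (\<Sum>Y\<in>{Y. Y \<subseteq> E \<and> card Y = j}. mass E (\<lambda>e. \<Prod>i\<in>I. F i e) Y)"
    using assms by (intro sum.cong refl sum_prod_mass_Inter_eq) auto
  finally show ?thesis .
qed

lemma sum_times_Q_exactly:
  assumes "finite S"
  shows "(\<Sum>x\<in>S. f x * Q_exactly j (g x)) = (\<Sum>x\<in>{x \<in> S. card (g x) = j}. f x)"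
  using assms by (simp add: Q_exactly_def sum.inter_filter if_distrib cong: if_cong)

lemma FA_unary:
  "FA E 1 (\<lambda>Ys. q (Ys 0)) (\<lambda>_. \<mu>) = (\<Sum>Y\<in>Pow E. mass E \<mu> Y * q Y)"
proof -
  have "bij_betw (\<lambda>Ys. Ys 0) (PiE {..<1::nat} (\<lambda>_. Pow E)) (Pow E)"
    by (rule bij_betwI[where g = "\<lambda>Y. \<lambda>i\<in>{..<1}. Y"])
       (auto simp: PiE_iff extensional_def fun_eq_iff)
  then show ?thesis
    unfolding FA_def by (simp add: sum.reindex_bij_betw[symmetric])
qed

text \<open>Complementing the coordinates with l i \<noteq> 1 is an involution on tuples of subsets of E
  which moves the exponents l i from the crisp arguments of Phi to the fuzzy arguments.\<close>
lemma FA_comp_Phi: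
  "FA E n (\<lambda>Ys. q (Phi E n l Ys)) X
   = (\<Sum>Ys\<in>PiE {..<n} (\<lambda>_. Pow E). (\<Prod>i<n. mass E (fpow (l i) (X i)) (Ys i)) * q (\<Inter>i<n. Ys i))"
proof -
  let ?P = "PiE {..<n} (\<lambda>_. Pow E)"
  let ?G = "\<lambda>Ys. (\<Prod>i<n. mass E (fpow (l i) (X i)) (Ys i)) * q (\<Inter>i<n. Ys i)"
  let ?flip = "\<lambda>Ys. \<lambda>i\<in>{..<n}. cpow E (l i) (Ys i)"
  have flip_bij: "bij_betw ?flip ?P ?P"
    by (rule bij_betwI[where g = ?flip])
       (auto simp: PiE_iff extensional_def fun_eq_iff cpow_cpow cpow_subset)
  have "(\<Prod>i<n. mass E (X i) (Ys i)) * q (Phi E n l Ys) = ?G (?flip Ys)" if "Ys \<in> ?P" for Ys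
  proof -
    have "(\<Prod>i<n. mass E (fpow (l i) (X i)) (?flip Ys i)) = (\<Prod>i<n. mass E (X i) (Ys i))"
      using that by (intro prod.cong refl) (auto simp: PiE_iff mass_fpow_cpow)
    moreover have "(\<Inter>i<n. ?flip Ys i) = Phi E n l Ys"
      unfolding Phi_def by auto
    ultimately show ?thesis
      by simp
  qed
  then have "FA E n (\<lambda>Ys. q (Phi E n l Ys)) X = (\<Sum>Ys\<in>?P. ?G (?flip Ys))"
    unfolding FA_def by (rule sum.cong[OF refl])
  also have "\<dots> = (\<Sum>Ys\<in>?P. ?G Ys)"
    by (rule sum.reindex_bij_betw[OF flip_bij])
  finally show ?thesis .
qed

theorem lemma1:
  fixes E :: "'a set" and n :: nat and X :: "nat \<Rightarrow> 'a \<Rightarrow> real"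
    and l :: "nat \<Rightarrow> nat" and j :: nat
  assumes "finite E" and "n \<ge> 1"
    and "\<And>i e. i < n \<Longrightarrow> e \<in> E \<Longrightarrow> 0 \<le> X i e \<and> X i e \<le> 1"
    and "\<And>i. i < n \<Longrightarrow> l i \<in> {0, 1}"
    and "j \<in> {0..card E}"
  shows "FA E 1 (\<lambda>Ys. Q_exactly j (Ys 0)) (\<lambda>_. fint n l X)
           = (\<Sum>Y\<in>{Y. Y \<subseteq> E \<and> card Y = j}. mass E (fint n l X) Y)
       \<and> (\<Sum>Y\<in>{Y. Y \<subseteq> E \<and> card Y = j}. mass E (fint n l X) Y)
           = (\<Sum>Ys\<in>{Ys \<in> PiE {..<n} (\<lambda>_. Pow E). card (\<Inter>i\<in>{..<n}. Ys i) = j}.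
                 \<Prod>i<n. mass E (fpow (l i) (X i)) (Ys i))
       \<and> (\<Sum>Ys\<in>{Ys \<in> PiE {..<n} (\<lambda>_. Pow E). card (\<Inter>i\<in>{..<n}. Ys i) = j}.
                 \<Prod>i<n. mass E (fpow (l i) (X i)) (Ys i))
           = FA E n (\<lambda>Ys. Q_exactly j (Phi E n l Ys)) X"
proof (intro conjI)
  have finite_tuples: "finite (PiE {..<n} (\<lambda>_. Pow E))"
    using \<open>finite E\<close> by (intro finite_PiE) auto
  show "FA E 1 (\<lambda>Ys. Q_exactly j (Ys 0)) (\<lambda>_. fint n l X)
          = (\<Sum>Y\<in>{Y. Y \<subseteq> E \<and> card Y = j}. mass E (fint n l X) Y)"
    using \<open>finite E\<close> by (simp only: FA_unary) (simp add: sum_times_Q_exactly Pow_def)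
  show "(\<Sum>Y\<in>{Y. Y \<subseteq> E \<and> card Y = j}. mass E (fint n l X) Y)
          = (\<Sum>Ys\<in>{Ys \<in> PiE {..<n} (\<lambda>_. Pow E). card (\<Inter>i\<in>{..<n}. Ys i) = j}.
               \<Prod>i<n. mass E (fpow (l i) (X i)) (Ys i))"
    using \<open>finite E\<close> \<open>n \<ge> 1\<close>
    by (subst sum_prod_mass_card_Inter) (auto simp: fint_def lessThan_empty_iff)
  show "(\<Sum>Ys\<in>{Ys \<in> PiE {..<n} (\<lambda>_. Pow E). card (\<Inter>i\<in>{..<n}. Ys i) = j}.
           \<Prod>i<n. mass E (fpow (l i) (X i)) (Ys i))
          = FA E n (\<lambda>Ys. Q_exactly j (Phi E n l Ys)) X"
    using finite_tuples by (simp add: FA_comp_Phi sum_times_Q_exactly)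
qed

end
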